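(* Let $u$ be the $C^2$ solution of $$ r\left(1+4u'^2+3u'^4\right) - 2u'\left(1+u'^2\right) + 2r\,u''\left(3u'^2-1\right)=0$$ with $u(0)=u'(0)=0$, defined on its maximal interval $[0,r_M)$. Then $u'(r)>0$ for all $r\in(0,r_M)$ (so $u$ is strictly increasing), and $u$ is convex on $[0,r_M)$; equivalently, the curvature of the profile curve $r\mapsto (r,u(r))$ is positive on its maximal domain and its slope $u'$ increases from $0$ towards $1/\sqrt3$.
   Context: The maximal domain of this solution is a bounded interval $[0,r_M)$ with $\lim_{r\to r_M^-}u'(r)=1/\sqrt3$, and $u''(0)=1/4$. *)

theory Defs
  imports "HOL-Analysis.Analysis"
begin

definition ode_eq :: "real \<Rightarrow> real \<Rightarrow> real \<Rightarrow> bool" where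
  "ode_eq r p q \<longleftrightarrow>
     r * (1 + 4 * p^2 + 3 * p^4) - 2 * p * (1 + p^2) + 2 * r * q * (3 * p^2 - 1) = 0"

definition C2_solution ::
  "real \<Rightarrow> (real \<Rightarrow> real) \<Rightarrow> (real \<Rightarrow> real) \<Rightarrow> (real \<Rightarrow> real) \<Rightarrow> bool" where
  "C2_solution R u u1 u2 \<longleftrightarrow>
     (\<forall>r\<in>{0..<R}. (u has_real_derivative u1 r) (at r within {0..<R}))
   \<and> (\<forall>r\<in>{0..<R}. (u1 has_real_derivative u2 r) (at r within {0..<R}))
   \<and> continuous_on {0..<R} u2
   \<and> (\<forall>r\<in>{0..<R}. ode_eq r (u1 r) (u2 r))
   \<and> u 0 = 0 \<and> u1 0 = 0"

end

theory Submission
  imports Defs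
begin

text \<open>
  Write p = u', q = u''. The ODE can be rewritten as
  2 r q (3 p^2 - 1) = (1 + p^2)(1 + 3 p^2) gap(r),  where  gap(r) = 2 p / (1 + 3 p^2) - r.
  Letting r tend to 0 in the ODE divided by r gives q(0) = 1/4, so gap'(0) = -1/2. At any later
  zero of gap the identity forces q = 0 or 3 p^2 = 1, and in both cases gap' = -1 there; a function
  vanishing at 0 that can only cross zero downwards stays negative, so gap < 0 on (0, r_M). Then q
  never vanishes on (0, r_M), hence q > 0 by continuity, and u' > 0 and convexity follow by the
  mean value theorem.
\<close>

lemma real_mvt_within:
  fixes f f' :: "real \<Rightarrow> real"
  assumes "connected A" "a \<in> A" "b \<in> A" "a < b"
    and deriv: "\<And>x. x \<in> A \<Longrightarrow> (f has_real_derivative f' x) (at x within A)"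
  shows "\<exists>z\<in>{a<..<b}. f b - f a = (b - a) * f' z"
proof -
  have "{a..b} \<subseteq> A"
    using assms(1-3) by (rule connected_contains_Icc)
  then have "(f has_derivative (*) (f' x)) (at x within {a..b})" if "x \<in> {a..b}" for x
    using has_field_derivative_subset[OF deriv] that unfolding has_field_derivative_def by blast
  then have "\<exists>z\<in>{a<..<b}. f b - f a = f' z * (b - a)"
    by (intro mvt_simple[OF \<open>a < b\<close>]) auto
  then show ?thesis by (simp add: mult.commute)
qed

lemma strict_mono_on_realI_within:
  fixes f f' :: "real \<Rightarrow> real"
  assumes "connected A"
    and "\<And>x. x \<in> A \<Longrightarrow> (f has_real_derivative f' x) (at x within A)"
    and "\<And>x. x \<in> A \<Longrightarrow> 0 < f' x"
  shows "strict_mono_on A f"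
proof (rule strict_mono_onI)
  fix x y assume xy: "x \<in> A" "y \<in> A" "x < y"
  then obtain z where z: "z \<in> {x<..<y}" "f y - f x = (y - x) * f' z"
    using real_mvt_within[OF assms(1) _ _ _ assms(2)] by blast
  have "z \<in> A"
    using connected_contains_Icc[OF assms(1) xy(1,2)] z(1) by auto
  then have "0 < (y - x) * f' z"
    using assms(3) xy by simp
  with z show "f x < f y" by simp
qed

lemma convex_on_realI_within:
  fixes f f' :: "real \<Rightarrow> real"
  assumes "connected A"
    and deriv: "\<And>x. x \<in> A \<Longrightarrow> (f has_real_derivative f' x) (at x within A)"
    and mono: "\<And>x y. x \<in> A \<Longrightarrow> y \<in> A \<Longrightarrow> x \<le> y \<Longrightarrow> f' x \<le> f' y"
  shows "convex_on A f"
proof (rule convex_on_linorderI)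
  show "convex A"
    using \<open>connected A\<close> connected_convex_1 by blast
next
  fix t x y :: real
  assume t: "0 < t" "t < 1" and xy: "x \<in> A" "y \<in> A" "x < y"
  define z where "z = (1 - t) * x + t * y"
  have zx: "z - x = t * (y - x)" and yz: "y - z = (1 - t) * (y - x)"
    by (simp_all add: z_def algebra_simps)
  have "0 < t * (y - x)" "0 < (1 - t) * (y - x)"
    using t xy by simp_all
  then have "x < z" "z < y"
    unfolding zx [symmetric] yz [symmetric] by simp_all
  have ivl: "{x..y} \<subseteq> A"
    using connected_contains_Icc[OF assms(1) xy(1,2)] .
  then have "z \<in> A"
    using \<open>x < z\<close> \<open>z < y\<close> by auto
  obtain \<xi> where \<xi>: "\<xi> \<in> {x<..<z}" "f z - f x = (z - x) * f' \<xi>"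
    using real_mvt_within[OF assms(1) xy(1) \<open>z \<in> A\<close> \<open>x < z\<close> deriv] by blast
  obtain \<eta> where \<eta>: "\<eta> \<in> {z<..<y}" "f y - f z = (y - z) * f' \<eta>"
    using real_mvt_within[OF assms(1) \<open>z \<in> A\<close> xy(2) \<open>z < y\<close> deriv] by blast
  have "f' \<xi> \<le> f' \<eta>"
    using \<xi>(1) \<eta>(1) ivl by (intro mono) auto
  then have "(z - x) * (y - z) * f' \<xi> \<le> (z - x) * (y - z) * f' \<eta>"
    using \<open>x < z\<close> \<open>z < y\<close> by (intro mult_left_mono) auto
  then have "(f z - f x) * (1 - t) * (y - x) \<le> (f y - f z) * t * (y - x)"
    using \<xi>(2) \<eta>(2) zx yz by (simp add: mult_ac)
  then have "(f z - f x) * (1 - t) \<le> (f y - f z) * t"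
    using xy by simp
  then show "f ((1 - t) *\<^sub>R x + t *\<^sub>R y) \<le> (1 - t) * f x + t * f y"
    by (simp add: z_def algebra_simps)
qed

lemma first_zero_after_negative:
  fixes g :: "real \<Rightarrow> real"
  assumes "p \<le> q" "continuous_on {p..q} g" "g p < 0" "0 \<le> g q"
  shows "\<exists>c\<in>{p<..q}. g c = 0 \<and> (\<forall>y\<in>{p..<c}. g y < 0)"
proof -
  define Z where "Z = {y \<in> {p..q}. g y = 0}"
  have zero_le: "\<exists>z\<in>Z. z \<le> y" if y: "y \<in> {p..q}" "0 \<le> g y" for y
  proof -
    have "continuous_on {p..y} g"
      using continuous_on_subset[OF assms(2)] y(1) by auto
    then obtain z where "p \<le> z" "z \<le> y" "g z = 0"
      using IVT'[of g p 0 y] assms(3) y by auto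
    then show ?thesis
      using y(1) by (auto simp: Z_def)
  qed
  have "Z \<noteq> {}"
    using zero_le[of q] assms(1,4) by auto
  moreover have "closed Z"
    unfolding Z_def by (rule continuous_closed_preimage_constant[OF assms(2) closed_atLeastAtMost])
  moreover have "bdd_below Z"
    by (rule bdd_belowI[of _ p]) (auto simp: Z_def)
  ultimately have c: "Inf Z \<in> Z" and c_le: "\<And>z. z \<in> Z \<Longrightarrow> Inf Z \<le> z"
    by (auto intro: closed_contains_Inf cInf_lower)
  have "g y < 0" if "y \<in> {p..<Inf Z}" for y
    using zero_le[of y] c c_le that by (force simp: Z_def)
  moreover have "p \<noteq> Inf Z"
    using c assms(3) by (auto simp: Z_def)
  ultimately show ?thesis
    using c by (auto simp: Z_def)
qed

lemma neg_if_deriv_neg_at_zeros: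
  fixes g g' :: "real \<Rightarrow> real"
  assumes deriv: "\<And>x. x \<in> {a..<b} \<Longrightarrow> (g has_real_derivative g' x) (at x within {a..<b})"
    and "g a = 0" "g' a < 0"
    and zeros: "\<And>x. x \<in> {a<..<b} \<Longrightarrow> g x = 0 \<Longrightarrow> g' x < 0"
    and x: "x \<in> {a<..<b}"
  shows "g x < 0"
proof (rule ccontr)
  assume "\<not> g x < 0"
  have "a \<in> {a..<b}"
    using x by auto
  obtain d where d: "0 < d" "\<And>h. 0 < h \<Longrightarrow> a + h \<in> {a..<b} \<Longrightarrow> h < d \<Longrightarrow> g (a + h) < 0"
    using has_real_derivative_neg_dec_right[OF deriv[OF \<open>a \<in> {a..<b}\<close>] \<open>g' a < 0\<close>] \<open>g a = 0\<close>
    by auto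
  define h where "h = min d (x - a) / 2"
  have "0 < h" "h < d" "h < x - a"
    using d(1) x by (auto simp: h_def)
  define p where "p = a + h"
  have "a < p" "p < x" "g p < 0"
    using d(2)[of h] \<open>0 < h\<close> \<open>h < d\<close> \<open>h < x - a\<close> x by (auto simp: p_def)
  moreover have "continuous_on {p..x} g"
    by (rule continuous_on_subset[OF DERIV_continuous_on[OF deriv]]) (use \<open>a < p\<close> x in auto)
  ultimately obtain c where c: "c \<in> {p<..x}" "g c = 0" "\<forall>y\<in>{p..<c}. g y < 0"
    using first_zero_after_negative[of p x g] \<open>\<not> g x < 0\<close> by auto
  have "c \<in> {a<..<b}"
    using c(1) \<open>a < p\<close> x by auto
  obtain e where e: "0 < e" "\<And>h. 0 < h \<Longrightarrow> c - h \<in> {a..<b} \<Longrightarrow> h < e \<Longrightarrow> g c < g (c - h)"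
    using has_real_derivative_neg_dec_left[OF deriv zeros[OF \<open>c \<in> {a<..<b}\<close> c(2)]]
      \<open>c \<in> {a<..<b}\<close> by auto
  define k where "k = min e (c - p) / 2"
  have "0 < k" "k < e" "k < c - p"
    using e(1) c(1) by (auto simp: k_def)
  then have "c - k \<in> {p..<c}" "0 < g (c - k)"
    using e(2)[of k] c(2) \<open>a < p\<close> \<open>c \<in> {a<..<b}\<close> by auto
  with c(3) show False
    by fastforce
qed

lemma ode_eq_factored:
  "ode_eq r p q \<longleftrightarrow> 2 * r * q * (3 * p^2 - 1) = (1 + p^2) * (2 * p - r * (1 + 3 * p^2))"
  unfolding ode_eq_def by (auto simp: algebra_simps power2_eq_square power4_eq_xxxx)

locale ode_solution =
  fixes R :: real and u u1 u2 :: "real \<Rightarrow> real"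
  assumes R_pos: "0 < R" and solution: "C2_solution R u u1 u2"
begin

lemma
  shows u_deriv: "\<And>r. r \<in> {0..<R} \<Longrightarrow> (u has_real_derivative u1 r) (at r within {0..<R})"
    and u1_deriv: "\<And>r. r \<in> {0..<R} \<Longrightarrow> (u1 has_real_derivative u2 r) (at r within {0..<R})"
    and u2_continuous: "continuous_on {0..<R} u2"
    and ode: "\<And>r. r \<in> {0..<R} \<Longrightarrow> ode_eq r (u1 r) (u2 r)"
    and u1_0: "u1 0 = 0"
  using solution unfolding C2_solution_def by auto

lemma u2_0: "u2 0 = 1 / 4"
proof -
  let ?F = "at (0::real) within {0..<R}"
  have "0 \<in> {0..<R}"
    using R_pos by simp
  have "\<not> trivial_limit ?F"
    using R_pos by (simp add: trivial_limit_within)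
  have "((\<lambda>r. u1 r / r) \<longlongrightarrow> u2 0) ?F"
    using u1_deriv[OF \<open>0 \<in> {0..<R}\<close>] u1_0 by (simp add: has_field_derivative_iff)
  moreover have "(u1 \<longlongrightarrow> 0) ?F"
    using DERIV_continuous_on[OF u1_deriv] \<open>0 \<in> {0..<R}\<close> u1_0
    unfolding continuous_on_def by fastforce
  moreover have "(u2 \<longlongrightarrow> u2 0) ?F"
    using u2_continuous \<open>0 \<in> {0..<R}\<close> unfolding continuous_on_def by blast
  \<comment> \<open>the ODE divided by r, in which u1 r / r tends to u2 0\<close>
  ultimately have "((\<lambda>r. (1 + (u1 r)^2) * (1 + 3 * (u1 r)^2) - 2 * (u1 r / r) * (1 + (u1 r)^2)
      + 2 * u2 r * (3 * (u1 r)^2 - 1)) \<longlongrightarrow>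
      (1 + 0^2) * (1 + 3 * 0^2) - 2 * u2 0 * (1 + 0^2) + 2 * u2 0 * (3 * 0^2 - 1)) ?F"
    (is "(?E \<longlongrightarrow> _) _")
    by (intro tendsto_intros)
  moreover have "\<forall>\<^sub>F r in ?F. ?E r = 0"
    unfolding eventually_at_filter
  proof (intro always_eventually allI impI)
    fix r assume "r \<noteq> 0" "r \<in> {0..<R}"
    then show "?E r = 0"
      using ode[of r] unfolding ode_eq_def by (simp add: field_simps)
  qed
  then have "(?E \<longlongrightarrow> 0) ?F"
    by (simp add: tendsto_eventually)
  ultimately show ?thesis
    using tendsto_unique[OF \<open>\<not> trivial_limit ?F\<close>] by fastforce
qed

definition gap :: "real \<Rightarrow> real" where
  "gap r = 2 * u1 r / (1 + 3 * (u1 r)^2) - r"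

lemma denominator_pos: "0 < 1 + 3 * (u1 r)^2"
  by (simp add: add_pos_nonneg)

lemma gap_deriv:
  assumes "r \<in> {0..<R}"
  shows "(gap has_real_derivative 2 * u2 r * (1 - 3 * (u1 r)^2) / (1 + 3 * (u1 r)^2)^2 - 1)
    (at r within {0..<R})"
proof -
  have "((\<lambda>r. 2 * u1 r / (1 + 3 * (u1 r)^2) - r) has_real_derivative
      (2 * u2 r * (1 + 3 * (u1 r)^2) - 2 * u1 r * (3 * (2 * u1 r * u2 r))) / (1 + 3 * (u1 r)^2)^2 - 1)
      (at r within {0..<R})"
    using denominator_pos[of r]
    by (auto intro!: derivative_eq_intros u1_deriv[OF assms] simp: power2_eq_square field_simps)
  then show ?thesis
    unfolding gap_def[abs_def] by (simp add: algebra_simps power2_eq_square)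
qed

lemma ode_gap:
  assumes "r \<in> {0..<R}"
  shows "2 * r * u2 r * (3 * (u1 r)^2 - 1) = (1 + (u1 r)^2) * (1 + 3 * (u1 r)^2) * gap r"
proof -
  have "(1 + 3 * (u1 r)^2) * gap r = 2 * u1 r - r * (1 + 3 * (u1 r)^2)"
    unfolding gap_def using denominator_pos[of r] by (simp add: field_simps)
  then show ?thesis
    using ode[OF assms] unfolding ode_eq_factored by (simp add: mult.assoc)
qed

lemma gap_neg:
  assumes "r \<in> {0<..<R}"
  shows "gap r < 0"
proof (rule neg_if_deriv_neg_at_zeros[OF gap_deriv _ _ _ assms])
  show "gap 0 = 0"
    by (simp add: gap_def u1_0)
  show "2 * u2 0 * (1 - 3 * (u1 0)^2) / (1 + 3 * (u1 0)^2)^2 - 1 < 0"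
    by (simp add: u1_0 u2_0)
next
  fix x assume x: "x \<in> {0<..<R}" "gap x = 0"
  then have "u2 x = 0 \<or> 3 * (u1 x)^2 - 1 = 0"
    using ode_gap[of x] by auto
  then show "2 * u2 x * (1 - 3 * (u1 x)^2) / (1 + 3 * (u1 x)^2)^2 - 1 < 0"
    by auto
qed

lemma u2_nonzero:
  assumes "r \<in> {0<..<R}"
  shows "u2 r \<noteq> 0"
proof
  assume "u2 r = 0"
  then have "(1 + (u1 r)^2) * (1 + 3 * (u1 r)^2) * gap r = 0"
    using ode_gap[of r] assms by simp
  moreover have "0 < (1 + (u1 r)^2) * (1 + 3 * (u1 r)^2)"
    using denominator_pos[of r] by (simp add: add_pos_nonneg)
  ultimately have "gap r = 0"
    by (metis less_irrefl mult_eq_0_iff)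
  with gap_neg[OF assms] show False
    by simp
qed

lemma u2_pos:
  assumes "r \<in> {0..<R}"
  shows "0 < u2 r"
proof (rule ccontr)
  assume "\<not> 0 < u2 r"
  moreover have "continuous_on {0..r} u2"
    by (rule continuous_on_subset[OF u2_continuous]) (use assms in auto)
  ultimately obtain s where "0 \<le> s" "s \<le> r" "u2 s = 0"
    using IVT2'[of u2 r 0 0] assms u2_0 by auto
  then show False
    using u2_nonzero[of s] u2_0 assms by (cases "s = 0") auto
qed

lemma u1_strict_mono: "strict_mono_on {0..<R} u1"
  by (rule strict_mono_on_realI_within[OF _ u1_deriv u2_pos]) simp_all

lemma u1_pos:
  assumes "r \<in> {0<..<R}"
  shows "0 < u1 r"
  using strict_mono_onD[OF u1_strict_mono, of 0 r] assms u1_0 by auto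

lemma u_convex: "convex_on {0..<R} u"
  using convex_on_realI_within[OF _ u_deriv] u1_strict_mono
  by (simp add: strict_mono_on_leD)

end

theorem mainTheorem3:
  fixes u u1 u2 :: "real \<Rightarrow> real" and rM :: real
  assumes "0 < rM"
    and "C2_solution rM u u1 u2"
    and maximal: "\<not> (\<exists>R v v1 v2. R > rM \<and> C2_solution R v v1 v2 \<and> (\<forall>r\<in>{0..<rM}. v r = u r))"
  shows "(\<forall>r\<in>{0<..<rM}. u1 r > 0) \<and> convex_on {0..<rM} u
         \<and> (\<forall>r\<in>{0..<rM}. u2 r > 0)"
proof -
  interpret ode_solution rM u u1 u2
    using assms(1,2) by unfold_locales
  show ?thesis
    using u1_pos u_convex u2_pos by blast
qed

end
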